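(* Let $R$ be a commutative ring with unit, let $b\in R$, and let $\mathbf B=\begin{pmatrix}1&1&-1\\0&b&0\\0&0&b\end{pmatrix}$. (1) $\mathbf B$ is partition regular over $R$ if and only if $\mathrm{ann}(b)=\{x\in R: xb=0\}$ is infinite. (2) $\mathbf B$ satisfies the generalised columns condition over $R$ if and only if there exists $d\in R$ with $db=0$ and $d^nR$ infinite for all $n\ge0$.
   Context: $\mathbf{B}$ is partition regular over $R$ if for every $r\ge1$ and every map $\chi\colon R\to\{1,\dots,r\}$ there is a nonzero $\mathbf{x}=(x_1,x_2,x_3)^{\intercal}\in R^3$ with $\mathbf{B}\mathbf{x}=0$ and $\chi(x_1)=\chi(x_2)=\chi(x_3)$. Generalised columns condition for a $k\times l$ matrix over $R$ with columns $\mathbf c_1,\dots,\mathbf c_l$: there exist $m\ge0$, a partition $\{1,\dots,l\}=I_0\cup\dots\cup I_m$ and $d_0,\dots,d_m\in R\setminus\{0\}$ with (i) $d_0\sum_{i\in I_0}\mathbf c_i=0$; (ii) for $1\le t\le m$, $d_t\sum_{i\in I_t}\mathbf c_i$ lies in the $R$-submodule generated by the $\mathbf c_j$ with $j\in I_0\cup\dots\cup I_{t-1}$; (iii) if $m>0$, the ideal $d_0(d_1\cdots d_m)^nR$ is infinite for every $n\ge0$. *)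

theory Defs
  imports Main
begin

text \<open>A k x l matrix over a commutative ring R (the type 'a) is represented as a
function A :: nat => nat => 'a, with entry A i j for row i < k and column j < l.
Vectors in R^l are functions nat => 'a, only the components < l being relevant.\<close>

definition partition_regular :: "nat \<Rightarrow> nat \<Rightarrow> (nat \<Rightarrow> nat \<Rightarrow> 'a::comm_ring_1) \<Rightarrow> bool" where
  "partition_regular k l A \<longleftrightarrow>
     (\<forall>r::nat. r \<ge> 1 \<longrightarrow> (\<forall>\<chi> :: 'a \<Rightarrow> nat. (\<forall>x. \<chi> x \<in> {1..r}) \<longrightarrow>
        (\<exists>x :: nat \<Rightarrow> 'a. (\<exists>i<l. x i \<noteq> 0) \<and>
            (\<forall>row<k. (\<Sum>j<l. A row j * x j) = 0) \<and>
            (\<forall>i<l. \<forall>j<l. \<chi> (x i) = \<chi> (x j)))))"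

definition in_column_span :: "nat \<Rightarrow> (nat \<Rightarrow> nat \<Rightarrow> 'a::comm_ring_1) \<Rightarrow> nat set \<Rightarrow> (nat \<Rightarrow> 'a) \<Rightarrow> bool" where
  "in_column_span k A J v \<longleftrightarrow>
     (\<exists>a :: nat \<Rightarrow> 'a. \<forall>row<k. v row = (\<Sum>j\<in>J. a j * A row j))"

definition generalised_columns_condition :: "nat \<Rightarrow> nat \<Rightarrow> (nat \<Rightarrow> nat \<Rightarrow> 'a::comm_ring_1) \<Rightarrow> bool" where
  "generalised_columns_condition k l A \<longleftrightarrow>
     (\<exists>(m::nat) (I :: nat \<Rightarrow> nat set) (d :: nat \<Rightarrow> 'a).
        (\<Union>t\<le>m. I t) = {..<l} \<and>
        (\<forall>t\<le>m. I t \<noteq> {}) \<and>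
        (\<forall>s\<le>m. \<forall>t\<le>m. s \<noteq> t \<longrightarrow> I s \<inter> I t = {}) \<and>
        (\<forall>t\<le>m. d t \<noteq> 0) \<and>
        (\<forall>row<k. d 0 * (\<Sum>i\<in>I 0. A row i) = 0) \<and>
        (\<forall>t\<in>{1..m}. in_column_span k A (\<Union>s<t. I s) (\<lambda>row. d t * (\<Sum>i\<in>I t. A row i))) \<and>
        (m > 0 \<longrightarrow> (\<forall>n::nat. infinite (range (\<lambda>r. d 0 * (\<Prod>t\<in>{1..m}. d t) ^ n * r)))))"

definition matB :: "'a::comm_ring_1 \<Rightarrow> nat \<Rightarrow> nat \<Rightarrow> 'a" where
  "matB b i j = (if i = 0 then (if j = 0 then 1 else if j = 1 then 1 else if j = 2 then -1 else 0)
                 else if i = j then b else 0)"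

end

(*
  B x = 0 says exactly that x_1 and x_2 annihilate b and x_0 = x_2 - x_1.  If ann(b) is finite,
  colour it injectively: a monochromatic solution is then constant, hence zero.  If ann(b) is
  infinite, take distinct a_0, a_1, ... in ann(b) and colour the pair i < j by the colour of
  a_j - a_i; Ramsey's theorem gives i < j < k spanning a monochromatic triangle, and
  (a_j - a_i, a_k - a_j, a_k - a_i) is a monochromatic solution.

  For the columns condition, row 0 of B is (1, 1, -1), so over every nonempty set of columns
  other than a complement {0,1,2} - {c} it sums to 1 or -1, which a nonzero d_0 cannot kill.
  The partition is therefore I_0 = {0,1,2} - {c}, I_1 = {c}, and d_1 times column c lies in
  the span of the other two columns only if d_1 b = 0.  Conversely I_0 = {1,2}, I_1 = {0},
  d_0 = d_1 = d works.
*)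

theory Submission
  imports Defs "HOL-Library.Ramsey"
begin

lemma ramsey_monochromatic_triangle:
  fixes c :: "nat \<Rightarrow> nat \<Rightarrow> nat"
  assumes "\<And>i j. c i j < s"
  obtains i j k where "i < j" "j < k" "c i j = c j k" "c i k = c j k"
proof -
  define g where "g S = c (Min S) (Max S)" for S :: "nat set"
  obtain Y t where Y: "infinite Y" and monochromatic: "\<forall>x\<in>Y. \<forall>y\<in>Y. x \<noteq> y \<longrightarrow> g {x, y} = t"
    using Ramsey2[of "UNIV :: nat set" g s] assms by (auto simp: g_def)
  have colour: "c x y = t" if "x \<in> Y" "y \<in> Y" "x < y" for x y
  proof -
    have "g {x, y} = c x y"
      using \<open>x < y\<close> by (simp add: g_def min_def max_def)
    then show ?thesis
      using monochromatic that by fastforce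
  qed
  obtain i where i: "i \<in> Y"
    using Y by (metis finite.emptyI ex_in_conv)
  obtain j where j: "j \<in> Y" "i < j"
    using Y by (meson infinite_nat_iff_unbounded)
  obtain k where k: "k \<in> Y" "j < k"
    using Y by (meson infinite_nat_iff_unbounded)
  have "c i j = t" "c j k = t" "c i k = t"
    using colour[OF i j] colour[OF j(1) k] colour[OF i k(1)] j(2) k(2) by simp_all
  with that j(2) k(2) show thesis
    by simp
qed

lemma finite_set_injective_colouring:
  assumes "finite S"
  obtains r :: nat and \<chi> :: "'a \<Rightarrow> nat" where "r \<ge> 1" "\<And>x. \<chi> x \<in> {1..r}" "inj_on \<chi> S"
proof -
  obtain f and n :: nat where f: "f ` S = {i. i < n}" "inj_on f S"
    using finite_imp_inj_to_nat_seg[OF assms] by blast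
  show thesis
  proof (rule that[of "n + 1" "\<lambda>x. if x \<in> S then f x + 1 else 1"])
    show "inj_on (\<lambda>x. if x \<in> S then f x + 1 else 1) S"
      using f(2) by (auto simp: inj_on_def)
    show "(if x \<in> S then f x + 1 else 1) \<in> {1..n + 1}" for x
      using f(1) by (fastforce intro: less_imp_le)
  qed simp
qed

lemma infinite_range_mult_dvd:
  fixes x y :: "'a::comm_semiring_1"
  assumes "infinite (range (\<lambda>r. x * r))" and "y dvd x"
  shows "infinite (range (\<lambda>r. y * r))"
proof -
  have "range (\<lambda>r. x * r) \<subseteq> range (\<lambda>r. y * r)"
    using \<open>y dvd x\<close> by (auto elim: dvdE simp: mult.assoc)
  then show ?thesis
    using assms(1) finite_subset by blast
qed

lemma partition_first_block_cosingleton: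
  fixes m :: nat
  assumes cover: "(\<Union>t\<le>m. I t) = U"
    and nonempty: "\<forall>t\<le>m. I t \<noteq> {}"
    and disjoint: "\<forall>s\<le>m. \<forall>t\<le>m. s \<noteq> t \<longrightarrow> I s \<inter> I t = {}"
    and first: "I 0 = U - {c}" and "c \<in> U"
  shows "m = 1 \<and> I 1 = {c}"
proof -
  have later: "I t = {c}" if "1 \<le> t" "t \<le> m" for t
  proof -
    have "I t \<subseteq> U"
      using cover that by blast
    moreover have "I t \<inter> I 0 = {}"
      using disjoint[rule_format, of t 0] that by simp
    ultimately have "I t \<subseteq> {c}"
      using first by blast
    then show ?thesis
      using nonempty that by blast
  qed
  have "m \<noteq> 0"
  proof
    assume "m = 0"
    then have "I 0 = U"
      using cover by simp
    then show False
      using first \<open>c \<in> U\<close> by blast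
  qed
  moreover have "m < 2"
  proof (rule ccontr)
    assume "\<not> m < 2"
    then have "I 1 = {c}" "I 2 = {c}" "I 1 \<inter> I 2 = {}"
      using later[of 1] later[of 2] disjoint[rule_format, of 1 2] by simp_all
    then show False
      by simp
  qed
  ultimately show ?thesis
    using later by simp
qed

lemma all_less_3: "(\<forall>i<3::nat. P i) \<longleftrightarrow> P 0 \<and> P 1 \<and> P 2"
  by (auto simp: less_Suc_eq numeral_3_eq_3 numeral_2_eq_2)

lemma ex_less_3: "(\<exists>i<3::nat. P i) \<longleftrightarrow> P 0 \<or> P 1 \<or> P 2"
  by (auto simp: less_Suc_eq numeral_3_eq_3 numeral_2_eq_2)

lemma sum_lessThan_3: "(\<Sum>j<3::nat. f j) = f 0 + f 1 + f 2"
  by (simp add: eval_nat_numeral)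

lemma matB_kernel_iff:
  fixes b :: "'a::comm_ring_1"
  shows "(\<forall>row<3. (\<Sum>j<3. matB b row j * x j) = 0) \<longleftrightarrow>
         x 0 + x 1 = x 2 \<and> x 1 * b = 0 \<and> x 2 * b = 0"
  unfolding all_less_3 sum_lessThan_3
  by (simp add: matB_def mult.commute)

lemma matB_first_block:
  fixes b d :: "'a::comm_ring_1"
  assumes "I \<subseteq> {..<3}" "I \<noteq> {}" "d \<noteq> 0" "d * (\<Sum>i\<in>I. matB b 0 i) = 0"
  obtains c where "c < 3" "I = {..<3} - {c}"
proof -
  have "I \<in> Pow {0, 1, 2}"
    using assms(1) by (auto simp: less_Suc_eq numeral_3_eq_3 numeral_2_eq_2)
  then have "I = {} \<or> I = {0} \<or> I = {1} \<or> I = {2} \<or> I = {0, 1} \<or> I = {0, 2} \<or> I = {1, 2} \<or> I = {0, 1, 2}"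
    unfolding Pow_insert Pow_empty by (simp add: insert_commute)
  moreover have "{..<3} - {0} = {1, 2::nat}" "{..<3} - {1} = {0, 2::nat}" "{..<3} - {2} = {0, 1::nat}"
    by auto
  ultimately have "\<exists>c<3. I = {..<3} - {c}"
    unfolding ex_less_3 using assms(2-4) by (elim disjE) (simp_all add: matB_def)
  then show thesis
    using that by blast
qed

lemma matB_column_in_span_of_others_imp_annihilator:
  fixes b e :: "'a::comm_ring_1"
  assumes "in_column_span 3 (matB b) ({..<3} - {c}) (\<lambda>row. e * matB b row c)" and "c < 3"
  shows "e * b = 0"
proof -
  obtain a where a: "\<And>row. row < 3 \<Longrightarrow> e * matB b row c = (\<Sum>j\<in>{..<3} - {c}. a j * matB b row j)"
    using assms(1) unfolding in_column_span_def by blast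
  consider "c = 0" | "c = 1" | "c = 2"
    using \<open>c < 3\<close> by linarith
  then show ?thesis
  proof cases
    case 1
    then have "{..<3} - {c} = {1, 2}"
      by auto
    then have "e = a 1 - a 2" "a 1 * b = 0" "a 2 * b = 0"
      using a[of 0] a[of 1] a[of 2] 1 by (simp_all add: matB_def)
    then show ?thesis
      by (simp add: left_diff_distrib)
  next
    case 2
    then have "{..<3} - {c} = {0, 2}"
      by auto
    then show ?thesis
      using a[of 1] 2 by (simp add: matB_def)
  next
    case 3
    then have "{..<3} - {c} = {0, 1}"
      by auto
    then show ?thesis
      using a[of 2] 3 by (simp add: matB_def)
  qed
qed

lemma partition_regular_matB_imp_infinite_annihilator:
  fixes b :: "'a::comm_ring_1"
  assumes "partition_regular 3 3 (matB b)"
  shows "infinite {x::'a. x * b = 0}"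
proof
  let ?ann = "{x::'a. x * b = 0}"
  assume "finite ?ann"
  then obtain r and \<chi> :: "'a \<Rightarrow> nat" where "r \<ge> 1" "\<And>x. \<chi> x \<in> {1..r}" and inj: "inj_on \<chi> ?ann"
    using finite_set_injective_colouring by metis
  then obtain x :: "nat \<Rightarrow> 'a" where nonzero: "x 0 \<noteq> 0 \<or> x 1 \<noteq> 0 \<or> x 2 \<noteq> 0"
    and sum: "x 0 + x 1 = x 2" and x1: "x 1 * b = 0" and x2: "x 2 * b = 0"
    and monochromatic: "\<chi> (x 0) = \<chi> (x 1)" "\<chi> (x 0) = \<chi> (x 2)"
    using assms unfolding partition_regular_def matB_kernel_iff ex_less_3 all_less_3 by metis
  have "x 0 = x 2 - x 1"
    using sum by (simp add: eq_diff_eq)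
  then have x0: "x 0 * b = 0"
    using x1 x2 by (simp add: left_diff_distrib)
  have "x 0 = x 1" "x 0 = x 2"
    using inj_onD[OF inj monochromatic(1)] inj_onD[OF inj monochromatic(2)] x0 x1 x2 by simp_all
  then show False
    using sum nonzero by simp
qed

lemma infinite_annihilator_imp_partition_regular_matB:
  fixes b :: "'a::comm_ring_1"
  assumes "infinite {x::'a. x * b = 0}"
  shows "partition_regular 3 3 (matB b)"
  unfolding partition_regular_def
proof (intro allI impI)
  fix r :: nat and \<chi> :: "'a \<Rightarrow> nat"
  assume "\<forall>x. \<chi> x \<in> {1..r}"
  then have bounded: "\<chi> x < r + 1" for x
    by (simp add: le_imp_less_Suc)
  obtain a :: "nat \<Rightarrow> 'a" where "inj a" and ann: "\<And>n. a n * b = 0"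
    using infinite_countable_subset[OF assms] by blast
  obtain i j k where "i < j" "j < k"
    and monochromatic: "\<chi> (a j - a i) = \<chi> (a k - a j)" "\<chi> (a k - a i) = \<chi> (a k - a j)"
    using ramsey_monochromatic_triangle[of "\<lambda>i j. \<chi> (a j - a i)"] bounded by metis
  have "a j - a i \<noteq> 0"
    using \<open>inj a\<close> \<open>i < j\<close> by (simp add: inj_eq)
  then show "\<exists>x. (\<exists>i<3. x i \<noteq> 0) \<and> (\<forall>row<3. (\<Sum>j<3. matB b row j * x j) = 0) \<and>
      (\<forall>i<3. \<forall>j<3. \<chi> (x i) = \<chi> (x j))"
    unfolding matB_kernel_iff ex_less_3 all_less_3
    by (intro exI[of _ "(!) [a j - a i, a k - a j, a k - a i]"])
      (simp add: ann monochromatic left_diff_distrib)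
qed

lemma generalised_columns_condition_matB_imp_annihilator:
  fixes b :: "'a::comm_ring_1"
  assumes "generalised_columns_condition 3 3 (matB b)"
  shows "\<exists>d::'a. d * b = 0 \<and> (\<forall>n::nat. infinite (range (\<lambda>r. d ^ n * r)))"
proof -
  obtain m I and d :: "nat \<Rightarrow> 'a" where cover: "(\<Union>t\<le>m. I t) = {..<3}"
    and nonempty: "\<forall>t\<le>m. I t \<noteq> {}"
    and disjoint: "\<forall>s\<le>m. \<forall>t\<le>m. s \<noteq> t \<longrightarrow> I s \<inter> I t = {}"
    and nonzero: "\<forall>t\<le>m. d t \<noteq> 0"
    and first: "\<forall>row<3. d 0 * (\<Sum>i\<in>I 0. matB b row i) = 0"
    and span: "\<forall>t\<in>{1..m}. in_column_span 3 (matB b) (\<Union>s<t. I s) (\<lambda>row. d t * (\<Sum>i\<in>I t. matB b row i))"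
    and growth: "m > 0 \<longrightarrow> (\<forall>n. infinite (range (\<lambda>r. d 0 * (\<Prod>t\<in>{1..m}. d t) ^ n * r)))"
    using assms unfolding generalised_columns_condition_def by (elim exE conjE) (rule that; assumption)
  have "I 0 \<subseteq> {..<3}" "I 0 \<noteq> {}" "d 0 \<noteq> 0" "d 0 * (\<Sum>i\<in>I 0. matB b 0 i) = 0"
    using cover nonempty nonzero first by auto
  then obtain c where "c < 3" and I0: "I 0 = {..<3} - {c}"
    by (rule matB_first_block)
  then have "m = 1" and I1: "I 1 = {c}"
    using partition_first_block_cosingleton[OF cover nonempty disjoint I0] by simp_all
  have "(\<Union>s<1. I s) = I 0"
    by auto
  then have "in_column_span 3 (matB b) ({..<3} - {c}) (\<lambda>row. d 1 * matB b row c)"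
    using span \<open>m = 1\<close> I0 I1 by simp
  then have "d 1 * b = 0"
    using \<open>c < 3\<close> by (rule matB_column_in_span_of_others_imp_annihilator)
  moreover have "infinite (range (\<lambda>r. d 1 ^ n * r))" for n
  proof -
    have "infinite (range (\<lambda>r. d 0 * d 1 ^ n * r))"
      using growth \<open>m = 1\<close> by simp
    then show ?thesis
      by (rule infinite_range_mult_dvd) simp
  qed
  ultimately show ?thesis
    by blast
qed

lemma annihilator_imp_generalised_columns_condition_matB:
  fixes b d :: "'a::comm_ring_1"
  assumes "d * b = 0" and growth: "\<forall>n::nat. infinite (range (\<lambda>r. d ^ n * r))"
  shows "generalised_columns_condition 3 3 (matB b)"
proof -
  have "d \<noteq> 0"
    using growth[rule_format, of 1] by auto
  define I :: "nat \<Rightarrow> nat set" where "I t = (if t = 0 then {1, 2} else {0})" for t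
  have span: "in_column_span 3 (matB b) {1, 2} (\<lambda>row. d * matB b row 0)"
    unfolding in_column_span_def all_less_3 using \<open>d * b = 0\<close>
    by (intro exI[of _ "\<lambda>j. if j = 1 then d else 0"]) (simp add: matB_def)
  have "(\<Union>s<1. I s) = {1, 2}"
    by (auto simp: I_def)
  show ?thesis
    unfolding generalised_columns_condition_def
  proof (intro exI[of _ "1::nat"] exI[of _ I] exI[of _ "\<lambda>_. d"] conjI)
    show "(\<Union>t\<le>1. I t) = {..<3}"
      by (auto simp: I_def atMost_Suc)
    show "\<forall>t\<le>1. I t \<noteq> {}" and "\<forall>s\<le>1. \<forall>t\<le>1. s \<noteq> t \<longrightarrow> I s \<inter> I t = {}"
      by (auto simp: I_def)
    show "\<forall>t\<le>1. d \<noteq> 0"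
      using \<open>d \<noteq> 0\<close> by simp
    show "\<forall>row<3. d * (\<Sum>i\<in>I 0. matB b row i) = 0"
      unfolding all_less_3 using \<open>d * b = 0\<close> by (simp add: I_def matB_def)
    show "\<forall>t\<in>{1..1}. in_column_span 3 (matB b) (\<Union>s<t. I s) (\<lambda>row. d * (\<Sum>i\<in>I t. matB b row i))"
      using span \<open>(\<Union>s<1. I s) = {1, 2}\<close> by (simp add: I_def)
    show "1 > (0::nat) \<longrightarrow> (\<forall>n. infinite (range (\<lambda>r. d * (\<Prod>t::nat\<in>{1..1}. d) ^ n * r)))"
      using growth by (simp add: atLeastAtMost_singleton flip: power_Suc)
  qed
qed

theorem lemma4p2:
  fixes b :: "'a::comm_ring_1"
  shows "(partition_regular 3 3 (matB b) \<longleftrightarrow> infinite {x::'a. x * b = 0})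
       \<and> (generalised_columns_condition 3 3 (matB b) \<longleftrightarrow>
            (\<exists>d::'a. d * b = 0 \<and> (\<forall>n::nat. infinite (range (\<lambda>r. d ^ n * r)))))"
  using partition_regular_matB_imp_infinite_annihilator infinite_annihilator_imp_partition_regular_matB
    generalised_columns_condition_matB_imp_annihilator annihilator_imp_generalised_columns_condition_matB
  by blast

end
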